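(* As an identity of formal power series in $x$, \[ \frac{2(2-x)}{(1-x)^2} \sum_{j=0}^\infty f_j\!\left(2-\frac1x, 2-\frac1x\right) = \frac{3}{1-x} + \frac{1-x}{(1-2x)^2}\sum_{j=0}^\infty f_j\!\left(3-\frac1x,3-\frac1x\right). \]
   Context: $(x)_j = x(x+1)\cdots(x+j-1)$ denotes the Pochhammer symbol (with $(x)_0=1$) and $f_j(x,y) = \frac{(j!)^2}{(x)_j (y)_j}$. Note $f_j(2-1/x,2-1/x) = \frac{(j!)^2x^{2j}}{\prod_{i=2}^{j+1}(1-ix)^2}$ and $f_j(3-1/x,3-1/x)=\frac{(j!)^2x^{2j}}{\prod_{i=3}^{j+2}(1-ix)^2}$, which are power series in $x$ of order at least $2j$, so the sums converge formally. *)

theory Defs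
  imports "HOL-Computational_Algebra.Formal_Power_Series"
begin

text \<open>For a natural number a, the formal power series
  f_j(a - 1/x, a - 1/x) = (j!)^2 x^(2j) / prod_{i=a}^{j+a-1} (1 - i x)^2,
  as given in the context of the paper.\<close>
definition fterm :: "nat \<Rightarrow> nat \<Rightarrow> real fps" where
  "fterm a j = fps_const ((fact j)^2) * fps_X ^ (2 * j)
      / (\<Prod>i = a..j + a - 1. (1 - of_nat i * fps_X))^2"

end

theory Submission
  imports Defs
begin

text \<open>Write \<open>A\<close>, \<open>B\<close> for the two prefactors and \<open>f_j(a)\<close> for \<open>fterm a j\<close>. The ratios
  \<open>f_{j+1}(2) / f_j(2) = (j+1)^2 x^2 / (1-(j+2)x)^2\<close> and \<open>f_j(3) / f_j(2) = (1-2x)^2 / (1-(j+2)x)^2\<close>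
  give \<open>A f_j(2) - B f_j(3) = G(j+1) - G(j)\<close> for the hypergeometric antidifference
  \<open>G(j) = (2jx - 3(1-x)) / (1-x)^2 \<cdot> f_j(2)\<close>. As \<open>G(j)\<close> has order at least \<open>2j\<close>, the series
  telescopes in the \<open>x\<close>-adic topology to \<open>-G(0) = 3/(1-x)\<close>.\<close>

unbundle fps_syntax

lemma tendsto_fps_mult_left:
  fixes S :: "'b \<Rightarrow> 'a::comm_ring_1 fps"
  assumes "(S \<longlongrightarrow> s) F"
  shows "((\<lambda>x. c * S x) \<longlongrightarrow> c * s) F"
proof (rule tendsto_fpsI)
  fix n
  have "eventually (\<lambda>x. \<forall>m\<in>{..n}. S x $ m = s $ m) F"
    using assms by (simp add: tendsto_fps_iff eventually_ball_finite_distrib)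
  then show "eventually (\<lambda>x. (c * S x) $ n = (c * s) $ n) F"
    by eventually_elim (auto simp: fps_mult_nth intro!: sum.cong)
qed

lemma sums_fps_mult_left:
  fixes f :: "nat \<Rightarrow> 'a::comm_ring_1 fps"
  assumes "f sums s"
  shows "(\<lambda>j. c * f j) sums (c * s)"
  using tendsto_fps_mult_left[OF assms[unfolded sums_def]]
  by (simp add: sums_def sum_distrib_left)

lemma sums_fps_diff:
  fixes f g :: "nat \<Rightarrow> 'a::ab_group_add fps"
  assumes "f sums a" "g sums b"
  shows "(\<lambda>j. f j - g j) sums (a - b)"
  unfolding sums_def sum_subtractf
proof (rule tendsto_fpsI)
  fix n
  from assms have "eventually (\<lambda>N. (\<Sum>j<N. f j) $ n = a $ n) sequentially"
    "eventually (\<lambda>N. (\<Sum>j<N. g j) $ n = b $ n) sequentially"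
    unfolding sums_def tendsto_fps_iff by blast+
  then show "eventually (\<lambda>N. ((\<Sum>j<N. f j) - (\<Sum>j<N. g j)) $ n = (a - b) $ n) sequentially"
    by eventually_elim simp
qed

lemma sums_fps_if_nth_vanishes:
  fixes f :: "nat \<Rightarrow> 'a::ab_group_add fps"
  assumes "\<And>j n. n < j \<Longrightarrow> f j $ n = 0"
  shows "f sums Abs_fps (\<lambda>n. \<Sum>j\<le>n. f j $ n)"
  unfolding sums_def
proof (rule tendsto_fpsI)
  fix n
  have "(\<Sum>j<N. f j) $ n = (\<Sum>j\<le>n. f j $ n)" if "n < N" for N
    using that by (auto simp: fps_sum_nth intro!: sum.mono_neutral_right assms)
  then show "eventually (\<lambda>N. (\<Sum>j<N. f j) $ n = Abs_fps (\<lambda>n. \<Sum>j\<le>n. f j $ n) $ n) sequentially"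
    by (auto simp: eventually_at_top_dense)
qed

lemma sums_fps_telescope:
  fixes G :: "nat \<Rightarrow> 'a::ab_group_add fps"
  assumes "\<And>j n. n < j \<Longrightarrow> G j $ n = 0"
  shows "(\<lambda>j. G (Suc j) - G j) sums (- G 0)"
proof -
  have "(\<lambda>j. G (Suc j) - G j) sums Abs_fps (\<lambda>n. \<Sum>j\<le>n. (G (Suc j) - G j) $ n)"
    by (rule sums_fps_if_nth_vanishes) (simp add: assms)
  also have "Abs_fps (\<lambda>n. \<Sum>j\<le>n. (G (Suc j) - G j) $ n) = - G 0"
  proof (rule fps_ext)
    fix n
    have "(\<Sum>j\<le>n. (G (Suc j) - G j) $ n) = (\<Sum>j<Suc n. G (Suc j) $ n - G j $ n)"
      by (simp add: lessThan_Suc_atMost)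
    also have "\<dots> = G (Suc n) $ n - G 0 $ n"
      by (rule sum_lessThan_telescope)
    finally show "Abs_fps (\<lambda>n. \<Sum>j\<le>n. (G (Suc j) - G j) $ n) $ n = (- G 0) $ n"
      by (simp add: assms)
  qed
  finally show ?thesis .
qed

lemma inverse_mult_1_minus_X: "inverse (1 - c * fps_X) * (1 - c * fps_X) = (1 :: 'a::field fps)"
  by (rule inverse_mult_eq_1) simp

lemma fterm_altdef:
  "fterm a j = fps_const ((fact j)^2) * fps_X ^ (2 * j)
     * inverse (\<Prod>i = a..<a + j. 1 - of_nat i * fps_X)^2"
proof -
  have prod_eq: "(\<Prod>i = a..j + a - 1. 1 - of_nat i * fps_X)
      = (\<Prod>i = a..<a + j. 1 - of_nat i * fps_X :: real fps)"
  proof (cases j)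
    case (Suc k)
    then have "{a..j + a - 1} = {a..<a + j}" by auto
    then show ?thesis by simp
  qed (cases a; simp)
  have "(\<Prod>i\<in>I. 1 - of_nat i * fps_X :: real fps) $ 0 = 1" for I
    by (induction I rule: infinite_finite_induct) auto
  then show ?thesis
    unfolding fterm_def prod_eq by (simp add: fps_divide_unit fps_inverse_power)
qed

lemma mult_fterm_nth_eq_0:
  assumes "n < 2 * j"
  shows "(g * fterm a j) $ n = 0"
proof -
  have "g * fterm a j
      = (g * fps_const ((fact j)^2) * inverse (\<Prod>i = a..<a + j. 1 - of_nat i * fps_X)^2)
        * fps_X ^ (2 * j)"
    by (simp only: fterm_altdef mult_ac)
  then show ?thesis
    using assms by (simp only: fps_X_power_mult_right_nth if_True)
qed

lemma fterm_Suc: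
  "fterm a (Suc j) = of_nat (Suc j)^2 * fps_X^2 * inverse (1 - of_nat (a + j) * fps_X)^2 * fterm a j"
proof -
  have prod: "(\<Prod>i = a..<a + Suc j. 1 - of_nat i * fps_X) = (\<Prod>i = a..<a + j. 1 - of_nat i * fps_X)
      * (1 - of_nat (a + j) * fps_X :: real fps)"
    by (simp add: prod.atLeastLessThan_Suc)
  have const: "fps_const ((fact (Suc j))^2 :: real) = fps_const ((fact j)^2) * of_nat (Suc j)^2"
    by (simp only: fact_Suc of_nat_mult power_mult_distrib fps_of_nat mult.commute
        flip: fps_const_power fps_const_mult)
  have X: "fps_X ^ (2 * Suc j) = fps_X^2 * (fps_X ^ (2 * j) :: real fps)"
    by (simp add: power_add power2_eq_square)
  show ?thesis
    unfolding fterm_altdef prod const X fps_inverse_mult power_mult_distrib by (simp only: mult_ac)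
qed

lemma fterm_Suc_left:
  "fterm (Suc a) j = (1 - of_nat a * fps_X)^2 * inverse (1 - of_nat (a + j) * fps_X)^2 * fterm a j"
proof -
  let ?Q = "\<lambda>a. \<Prod>i = a..<a + j. 1 - of_nat i * fps_X :: real fps"
  let ?l = "1 - of_nat a * fps_X :: real fps" and ?r = "1 - of_nat (a + j) * fps_X :: real fps"
  have "?l * ?Q (Suc a) = (\<Prod>i = a..<Suc (a + j). 1 - of_nat i * fps_X)"
    by (simp add: prod.atLeast_Suc_lessThan)
  also have "\<dots> = ?Q a * ?r"
    by (simp add: prod.atLeastLessThan_Suc)
  finally have inverse_eq: "inverse ?l * inverse (?Q (Suc a)) = inverse (?Q a) * inverse ?r"
    by (metis fps_inverse_mult)
  have "?l * inverse ?l = 1"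
    by (rule inverse_mult_eq_1') simp
  then have "inverse (?Q (Suc a)) = ?l * (inverse ?l * inverse (?Q (Suc a)))"
    by (simp only: mult.assoc[symmetric] mult_1)
  then have "inverse (?Q (Suc a)) = ?l * inverse (?Q a) * inverse ?r"
    by (simp only: inverse_eq mult.assoc)
  then show ?thesis
    by (simp add: fterm_altdef power_mult_distrib mult_ac)
qed

text \<open>Here \<open>ia\<close>, \<open>ib\<close>, \<open>ir\<close> stand for \<open>1/(1-x)\<close>, \<open>1/(1-2x)\<close>, \<open>1/(1-(j+2)x)\<close>
  and \<open>F\<close> for \<open>f_j(2)\<close>.\<close>

lemma telescoping_ring_identity:
  fixes X ia ib ir F n :: "'a::idom"
  assumes "ia * (1 - X) = 1" "ib * (1 - 2 * X) = 1" "ir * (1 - (n + 2) * X) = 1"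
  shows "2 * (2 - X) * ia^2 * F - (1 - X) * ib^2 * ((1 - 2 * X)^2 * ir^2 * F)
    = (2 * (n + 1) * X - 3 * (1 - X)) * ia^2 * ((n + 1)^2 * X^2 * ir^2 * F)
      - (2 * n * X - 3 * (1 - X)) * ia^2 * F"
  using assms by algebra

definition antidiff :: "nat \<Rightarrow> real fps" where
  "antidiff j = (2 * of_nat j * fps_X - 3 * (1 - fps_X)) / (1 - fps_X)^2 * fterm 2 j"

lemma antidiff_telescoping:
  "fps_const 2 * (2 - fps_X) / (1 - fps_X)^2 * fterm 2 j
     - (1 - fps_X) / (1 - fps_const 2 * fps_X)^2 * fterm 3 j
   = antidiff (Suc j) - antidiff j"
proof -
  define n :: "real fps" where "n = of_nat j"
  have antidiff_eq: "antidiff k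
      = (2 * of_nat k * fps_X - 3 * (1 - fps_X)) * inverse (1 - fps_X)^2 * fterm 2 k" for k
    by (simp add: antidiff_def fps_divide_unit fps_inverse_power)
  have antidiff_Suc: "antidiff (Suc j)
      = (2 * (n + 1) * fps_X - 3 * (1 - fps_X)) * inverse (1 - fps_X)^2
        * ((n + 1)^2 * fps_X^2 * inverse (1 - (n + 2) * fps_X)^2 * fterm 2 j)"
    unfolding antidiff_eq fterm_Suc by (simp add: n_def add.commute)
  have fterm_3: "fterm 3 j = (1 - 2 * fps_X)^2 * inverse (1 - (n + 2) * fps_X)^2 * fterm 2 j"
    using fterm_Suc_left[of 2 j] by (simp add: n_def numeral_3_eq_3 add.commute)
  have A: "fps_const 2 * (2 - fps_X) / (1 - fps_X)^2
      = 2 * (2 - fps_X) * inverse (1 - fps_X :: real fps)^2"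
    by (simp add: fps_divide_unit fps_inverse_power numeral_fps_const)
  have B: "(1 - fps_X) / (1 - fps_const 2 * fps_X)^2
      = (1 - fps_X) * inverse (1 - 2 * fps_X :: real fps)^2"
    by (simp add: fps_divide_unit fps_inverse_power numeral_fps_const)
  show ?thesis
    unfolding A B fterm_3 antidiff_Suc antidiff_eq[of j] n_def[symmetric]
    by (rule telescoping_ring_identity[OF inverse_mult_1_minus_X[of 1, simplified]
          inverse_mult_1_minus_X inverse_mult_1_minus_X])
qed

lemma uminus_antidiff_0: "- antidiff 0 = fps_const 3 / (1 - fps_X)"
proof -
  define u :: "real fps" where "u = inverse (1 - fps_X)"
  have "antidiff 0 = - 3 * (1 - fps_X) * u^2"
    by (simp add: antidiff_def fterm_def u_def fps_divide_unit fps_inverse_power)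
  then have "- antidiff 0 = 3 * u * (u * (1 - fps_X))"
    by (simp add: power2_eq_square algebra_simps)
  also have "\<dots> = fps_const 3 / (1 - fps_X)"
    using inverse_mult_1_minus_X[of 1] by (simp add: u_def fps_divide_unit numeral_fps_const)
  finally show ?thesis .
qed

theorem mainTheorem4:
  shows "summable (fterm 2) \<and> summable (fterm 3) \<and>
    fps_const 2 * (2 - fps_X) / (1 - fps_X)^2 * (\<Sum>j. fterm 2 j)
      = fps_const 3 / (1 - fps_X)
        + (1 - fps_X) / (1 - fps_const 2 * fps_X)^2 * (\<Sum>j. fterm 3 j)"
proof -
  let ?A = "fps_const 2 * (2 - fps_X) / (1 - fps_X)^2 :: real fps"
  let ?B = "(1 - fps_X) / (1 - fps_const 2 * fps_X)^2 :: real fps"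
  have low: "(g * fterm a j) $ n = 0" if "n < j" for g a j n
    using that by (intro mult_fterm_nth_eq_0) simp
  have summable: "summable (fterm a)" for a
    using sums_fps_if_nth_vanishes[of "fterm a"] low[of _ _ 1] by (auto simp: summable_def)
  have "(\<lambda>j. ?A * fterm 2 j - ?B * fterm 3 j)
      sums (?A * (\<Sum>j. fterm 2 j) - ?B * (\<Sum>j. fterm 3 j))"
    by (intro sums_fps_diff sums_fps_mult_left summable_sums summable)
  moreover have "(\<lambda>j. ?A * fterm 2 j - ?B * fterm 3 j) sums (- antidiff 0)"
    unfolding antidiff_telescoping by (rule sums_fps_telescope) (simp add: antidiff_def low)
  ultimately have "?A * (\<Sum>j. fterm 2 j) - ?B * (\<Sum>j. fterm 3 j) = fps_const 3 / (1 - fps_X)"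
    unfolding uminus_antidiff_0 by (rule sums_unique2)
  with summable show ?thesis
    by (simp only: diff_eq_eq add.commute)
qed

end
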